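(* Let $m\le k\le n$ be positive integers, $\mathbf a_1,\dots,\mathbf a_n\in\mathbb R^m$, $\mathbf A=[\mathbf a_1,\dots,\mathbf a_n]\in\mathbb R^{m\times n}$, and let $\hat{\mathbf x}$ (with $(\hat{\mathbf x},\hat w)$) be an optimal solution of the convex relaxation $\max\{w: w\le[\det(\sum_{i\in[n]}x_i\mathbf a_i\mathbf a_i^\top)]^{1/m},\ \sum_i x_i=k,\ \mathbf x\in[0,1]^n\}$. Let $S\subseteq[n]$ with $|S|=s\le k$. For indeterminates $t_1,t_2,t_3$ define $\mathbf y\in\mathbb R^n$ by $y_i=t_3$ if $i\in S$ and $y_i=\hat x_i t_2$ otherwise, and $$F(t_1,t_2,t_3)=\det\Big(\mathbf I_n+t_1\,\mathrm{diag}(\mathbf y)^{1/2}\mathbf A^\top\mathbf A\,\mathrm{diag}(\mathbf y)^{1/2}+\mathrm{diag}(\mathbf y)\Big).$$ Then the coefficient of $t_1^{m}t_2^{k-s}t_3^{s}$ in $F(t_1,t_2,t_3)$ equals $$\sum_{\substack{R\subseteq[n],\,|R|=m\\ r:=|R\setminus S|\le k-s}}\ \prod_{j\in R\setminus S}\hat x_j\,\det\Big(\sum_{i\in R}\mathbf a_i\mathbf a_i^\top\Big)\sum_{\substack{W\subseteq[n]\setminus(S\cup R)\\ |W|=k-s-r}}\ \prod_{j\in W}\hat x_j.$$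
   Context: $[n]=\{1,\dots,n\}$, $\mathbf I_n$ is the $n\times n$ identity matrix and $\mathrm{diag}(\mathbf y)$ the diagonal matrix with diagonal $\mathbf y$. $F$ is regarded as a polynomial in $t_1,t_2,t_3$. *)

theory Defs
  imports Complex_Main "Jordan_Normal_Form.Determinant"
begin

text \<open>Indices are 0-based: [n] is rendered as {0..<n}; column i of A is a_(i+1).\<close>

definition outer_sum :: "real mat \<Rightarrow> (nat \<Rightarrow> real) \<Rightarrow> nat set \<Rightarrow> real mat" where
  "outer_sum A w I = mat (dim_row A) (dim_row A)
     (\<lambda>(p,q). \<Sum>i\<in>I. w i * A $$ (p,i) * A $$ (q,i))"

definition feasible :: "nat \<Rightarrow> nat \<Rightarrow> (nat \<Rightarrow> real) \<Rightarrow> bool" where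
  "feasible n k x \<longleftrightarrow> (\<forall>i<n. 0 \<le> x i \<and> x i \<le> 1) \<and> (\<Sum>i<n. x i) = real k"

definition objective :: "real mat \<Rightarrow> (nat \<Rightarrow> real) \<Rightarrow> real" where
  "objective A x = root (dim_row A) (det (outer_sum A x {0..<dim_col A}))"

definition optimal_sol :: "real mat \<Rightarrow> nat \<Rightarrow> (nat \<Rightarrow> real) \<Rightarrow> bool" where
  "optimal_sol A k x \<longleftrightarrow> feasible (dim_col A) k x \<and>
     (\<forall>z. feasible (dim_col A) k z \<longrightarrow> objective A z \<le> objective A x)"

definition diag_vec :: "nat \<Rightarrow> (nat \<Rightarrow> real) \<Rightarrow> real mat" where
  "diag_vec n y = mat n n (\<lambda>(i,j). if i = j then y i else 0)"

definition yvec :: "nat set \<Rightarrow> (nat \<Rightarrow> real) \<Rightarrow> real \<Rightarrow> real \<Rightarrow> nat \<Rightarrow> real" where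
  "yvec S x t2 t3 = (\<lambda>i. if i \<in> S then t3 else x i * t2)"

definition Fdet :: "real mat \<Rightarrow> nat set \<Rightarrow> (nat \<Rightarrow> real) \<Rightarrow> real \<Rightarrow> real \<Rightarrow> real \<Rightarrow> real" where
  "Fdet A S x t1 t2 t3 =
     (let n = dim_col A; y = yvec S x t2 t3; D = diag_vec n (\<lambda>i. sqrt (y i)) in
      det (one_mat n + t1 \<cdot>\<^sub>m (D * transpose_mat A * A * D) + diag_vec n y))"

text \<open>c is the (finitely supported) coefficient family of a polynomial in t1,t2,t3
  that agrees with f wherever f is defined as in the paper (t2, t3 >= 0, so that the
  square roots diag(y)^(1/2) are real).\<close>
definition poly3_rep :: "(nat \<Rightarrow> nat \<Rightarrow> nat \<Rightarrow> real) \<Rightarrow> (real \<Rightarrow> real \<Rightarrow> real \<Rightarrow> real) \<Rightarrow> bool" where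
  "poly3_rep c f \<longleftrightarrow> (\<exists>N. (\<forall>a b d. (N < a \<or> N < b \<or> N < d) \<longrightarrow> c a b d = 0) \<and>
     (\<forall>t1 t2 t3. 0 \<le> t2 \<longrightarrow> 0 \<le> t3 \<longrightarrow>
        f t1 t2 t3 = (\<Sum>a\<le>N. \<Sum>b\<le>N. \<Sum>d\<le>N. c a b d * t1 ^ a * t2 ^ b * t3 ^ d)))"

end

theory Submission
  imports Defs
begin

text \<open>
  Expanding the determinant of a matrix plus a diagonal
  along principal minors, and then the remaining factors 1 + y_i, writes F as a sum over disjoint
  pairs (T, V) of the monomials det((A^T A)_T) t1^|T| \<Prod>_{i \<in> T \<union> V} y_i.
  The monomial t1^m t2^(k-s) t3^s comes exactly from the pairs with |T| = m, S \<subseteq> T \<union> V and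
  |(T \<union> V) - S| = k - s; these correspond bijectively to the pairs (R, W) = (T, V - S) of the
  claimed sum, and for |R| = m the minor det((A^T A)_R) equals det(\<Sum>_{i \<in> R} a_i a_i^T) because
  det(B^T B) = det(B B^T) for square B. The coefficient is well defined because a polynomial
  vanishing for all t1 and all t2, t3 \<ge> 0 is zero.
\<close>

section \<open>Coefficients of trivariate polynomials\<close>

lemma coeff_eq_0_if_vanishes_on_nonneg:
  fixes a :: "nat \<Rightarrow> real"
  assumes "\<And>x. 0 \<le> x \<Longrightarrow> (\<Sum>i\<le>N. a i * x ^ i) = 0" and "i \<le> N"
  shows "a i = 0"
proof (rule ccontr)
  assume "a i \<noteq> 0"
  then have "finite {x. (\<Sum>i\<le>N. a i * x ^ i) = 0}"
    using \<open>i \<le> N\<close> by (intro polyfun_roots_finite) auto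
  moreover have "{0::real..} \<subseteq> {x. (\<Sum>i\<le>N. a i * x ^ i) = 0}"
    using assms(1) by auto
  ultimately show False
    using finite_subset infinite_Ici by blast
qed

lemma trivariate_coeff_eq_0_if_vanishes:
  fixes e :: "nat \<Rightarrow> nat \<Rightarrow> nat \<Rightarrow> real"
  assumes vanish: "\<And>t1 t2 t3. 0 \<le> t2 \<Longrightarrow> 0 \<le> t3 \<Longrightarrow>
      (\<Sum>a\<le>N. \<Sum>b\<le>N. \<Sum>d\<le>N. e a b d * t1 ^ a * t2 ^ b * t3 ^ d) = 0"
    and "a \<le> N" "b \<le> N" "d \<le> N"
  shows "e a b d = 0"
proof -
  have vanish23: "(\<Sum>b\<le>N. \<Sum>d\<le>N. e a b d * t2 ^ b * t3 ^ d) = 0" if "0 \<le> t2" "0 \<le> t3" for t2 t3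
  proof (rule coeff_eq_0_if_vanishes_on_nonneg[where a = "\<lambda>a. \<Sum>b\<le>N. \<Sum>d\<le>N. e a b d * t2 ^ b * t3 ^ d"])
    show "(\<Sum>a\<le>N. (\<Sum>b\<le>N. \<Sum>d\<le>N. e a b d * t2 ^ b * t3 ^ d) * t1 ^ a) = 0" for t1
      using vanish[OF that, of t1] by (simp add: sum_distrib_left sum_distrib_right mult_ac)
  qed fact
  have vanish3: "(\<Sum>d\<le>N. e a b d * t3 ^ d) = 0" if "0 \<le> t3" for t3
  proof (rule coeff_eq_0_if_vanishes_on_nonneg[where a = "\<lambda>b. \<Sum>d\<le>N. e a b d * t3 ^ d"])
    show "(\<Sum>b\<le>N. (\<Sum>d\<le>N. e a b d * t3 ^ d) * t2 ^ b) = 0" if "0 \<le> t2" for t2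
      using vanish23[OF that \<open>0 \<le> t3\<close>] by (simp add: sum_distrib_left sum_distrib_right mult_ac)
  qed fact
  show ?thesis
    using vanish3 \<open>d \<le> N\<close> by (rule coeff_eq_0_if_vanishes_on_nonneg)
qed

lemma trivariate_sum_truncate:
  fixes c :: "nat \<Rightarrow> nat \<Rightarrow> nat \<Rightarrow> real"
  assumes "\<forall>a b d. (N < a \<or> N < b \<or> N < d) \<longrightarrow> c a b d = 0" and "N \<le> M"
  shows "(\<Sum>a\<le>M. \<Sum>b\<le>M. \<Sum>d\<le>M. c a b d * t1 ^ a * t2 ^ b * t3 ^ d)
       = (\<Sum>a\<le>N. \<Sum>b\<le>N. \<Sum>d\<le>N. c a b d * t1 ^ a * t2 ^ b * t3 ^ d)"
proof -
  have "(\<Sum>a\<le>M. \<Sum>b\<le>M. \<Sum>d\<le>M. c a b d * t1 ^ a * t2 ^ b * t3 ^ d)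
      = (\<Sum>a\<le>M. \<Sum>b\<le>M. \<Sum>d\<le>N. c a b d * t1 ^ a * t2 ^ b * t3 ^ d)"
    by (intro sum.cong refl sum.mono_neutral_right) (use assms in auto)
  also have "\<dots> = (\<Sum>a\<le>M. \<Sum>b\<le>N. \<Sum>d\<le>N. c a b d * t1 ^ a * t2 ^ b * t3 ^ d)"
    by (intro sum.cong refl sum.mono_neutral_right) (use assms in auto)
  also have "\<dots> = (\<Sum>a\<le>N. \<Sum>b\<le>N. \<Sum>d\<le>N. c a b d * t1 ^ a * t2 ^ b * t3 ^ d)"
    by (intro sum.mono_neutral_right) (use assms in auto)
  finally show ?thesis .
qed

lemma poly3_rep_unique:
  assumes "poly3_rep c f" and "poly3_rep c' f"
  shows "c = c'"
proof (intro ext)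
  fix a b d
  obtain N where c0: "\<forall>a b d. (N < a \<or> N < b \<or> N < d) \<longrightarrow> c a b d = 0"
    and c: "\<forall>t1 t2 t3. 0 \<le> t2 \<longrightarrow> 0 \<le> t3 \<longrightarrow>
      f t1 t2 t3 = (\<Sum>a\<le>N. \<Sum>b\<le>N. \<Sum>d\<le>N. c a b d * t1 ^ a * t2 ^ b * t3 ^ d)"
    using assms(1) unfolding poly3_rep_def by blast
  obtain N' where c'0: "\<forall>a b d. (N' < a \<or> N' < b \<or> N' < d) \<longrightarrow> c' a b d = 0"
    and c': "\<forall>t1 t2 t3. 0 \<le> t2 \<longrightarrow> 0 \<le> t3 \<longrightarrow>
      f t1 t2 t3 = (\<Sum>a\<le>N'. \<Sum>b\<le>N'. \<Sum>d\<le>N'. c' a b d * t1 ^ a * t2 ^ b * t3 ^ d)"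
    using assms(2) unfolding poly3_rep_def by blast
  define M where "M = max N N'"
  have "(\<Sum>a\<le>M. \<Sum>b\<le>M. \<Sum>d\<le>M. (c a b d - c' a b d) * t1 ^ a * t2 ^ b * t3 ^ d) = 0"
    if "0 \<le> t2" "0 \<le> t3" for t1 t2 t3
  proof -
    have "(\<Sum>a\<le>M. \<Sum>b\<le>M. \<Sum>d\<le>M. c a b d * t1 ^ a * t2 ^ b * t3 ^ d) = f t1 t2 t3"
      using trivariate_sum_truncate[OF c0, of M] c that by (simp add: M_def)
    moreover have "(\<Sum>a\<le>M. \<Sum>b\<le>M. \<Sum>d\<le>M. c' a b d * t1 ^ a * t2 ^ b * t3 ^ d) = f t1 t2 t3"
      using trivariate_sum_truncate[OF c'0, of M] c' that by (simp add: M_def)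
    ultimately show ?thesis
      by (simp add: left_diff_distrib sum_subtractf)
  qed
  then have "a \<le> M \<Longrightarrow> b \<le> M \<Longrightarrow> d \<le> M \<Longrightarrow> c a b d - c' a b d = 0"
    by (rule trivariate_coeff_eq_0_if_vanishes)
  then show "c a b d = c' a b d"
    using c0 c'0 by (force simp: M_def)
qed

lemma sum_monomials_group:
  fixes h :: "'q \<Rightarrow> real" and ka kb kd :: "'q \<Rightarrow> nat"
  assumes "finite P" and "\<And>q. q \<in> P \<Longrightarrow> ka q \<le> N \<and> kb q \<le> N \<and> kd q \<le> N"
  shows "(\<Sum>q\<in>P. h q * t1 ^ ka q * t2 ^ kb q * t3 ^ kd q) =
    (\<Sum>a\<le>N. \<Sum>b\<le>N. \<Sum>d\<le>N. (\<Sum>q | q \<in> P \<and> ka q = a \<and> kb q = b \<and> kd q = d. h q) *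
       t1 ^ a * t2 ^ b * t3 ^ d)"
proof -
  have "(\<Sum>q\<in>P. h q * t1 ^ ka q * t2 ^ kb q * t3 ^ kd q) =
      (\<Sum>e\<in>{..N} \<times> {..N} \<times> {..N}.
         \<Sum>q | q \<in> P \<and> (ka q, kb q, kd q) = e. h q * t1 ^ ka q * t2 ^ kb q * t3 ^ kd q)"
    by (rule sum.group[symmetric]) (use assms in auto)
  also have "\<dots> = (\<Sum>(a, b, d)\<in>{..N} \<times> {..N} \<times> {..N}.
      (\<Sum>q | q \<in> P \<and> ka q = a \<and> kb q = b \<and> kd q = d. h q) * t1 ^ a * t2 ^ b * t3 ^ d)"
  proof (rule sum.cong[OF refl], clarify)
    fix a b d
    show "(\<Sum>q | q \<in> P \<and> (ka q, kb q, kd q) = (a, b, d). h q * t1 ^ ka q * t2 ^ kb q * t3 ^ kd q) =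
        (\<Sum>q | q \<in> P \<and> ka q = a \<and> kb q = b \<and> kd q = d. h q) * t1 ^ a * t2 ^ b * t3 ^ d"
      unfolding sum_distrib_right by (intro sum.cong) auto
  qed
  finally show ?thesis
    by (simp add: sum.cartesian_product)
qed

lemma poly3_rep_monomial_sum:
  fixes h :: "'q \<Rightarrow> real" and ka kb kd :: "'q \<Rightarrow> nat"
  assumes "finite P"
    and "\<And>t1 t2 t3. 0 \<le> t2 \<Longrightarrow> 0 \<le> t3 \<Longrightarrow>
      f t1 t2 t3 = (\<Sum>q\<in>P. h q * t1 ^ ka q * t2 ^ kb q * t3 ^ kd q)"
  shows "poly3_rep (\<lambda>a b d. \<Sum>q | q \<in> P \<and> ka q = a \<and> kb q = b \<and> kd q = d. h q) f"
proof -
  define N where "N = Max (ka ` P \<union> kb ` P \<union> kd ` P)"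
  have bound: "ka q \<le> N \<and> kb q \<le> N \<and> kd q \<le> N" if "q \<in> P" for q
    using \<open>finite P\<close> that unfolding N_def by (intro conjI Max_ge) auto
  have "(\<Sum>q | q \<in> P \<and> ka q = a \<and> kb q = b \<and> kd q = d. h q) = 0"
    if "N < a \<or> N < b \<or> N < d" for a b d
  proof -
    have empty: "{q. q \<in> P \<and> ka q = a \<and> kb q = b \<and> kd q = d} = {}"
      using bound that by force
    show ?thesis
      unfolding empty by simp
  qed
  moreover have "f t1 t2 t3 = (\<Sum>a\<le>N. \<Sum>b\<le>N. \<Sum>d\<le>N.
      (\<Sum>q | q \<in> P \<and> ka q = a \<and> kb q = b \<and> kd q = d. h q) * t1 ^ a * t2 ^ b * t3 ^ d)"
    if "0 \<le> t2" "0 \<le> t3" for t1 t2 t3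
    using assms(2)[OF that] sum_monomials_group[OF assms(1) bound] by simp
  ultimately show ?thesis
    unfolding poly3_rep_def by blast
qed

section \<open>Principal minors\<close>

definition det_on :: "'i set \<Rightarrow> ('i \<Rightarrow> 'i \<Rightarrow> 'a::comm_ring_1) \<Rightarrow> 'a" where
  "det_on T M = (\<Sum>p | p permutes T. of_int (sign p) * (\<Prod>i\<in>T. M i (p i)))"

lemma det_on_cong:
  assumes "\<And>i j. i \<in> T \<Longrightarrow> j \<in> T \<Longrightarrow> M i j = M' i j"
  shows "det_on T M = det_on T M'"
  unfolding det_on_def using assms by (intro sum.cong refl arg_cong2[where f = "(*)"] prod.cong)
    (auto simp: permutes_in_image)

lemma det_eq_det_on:
  assumes "B \<in> carrier_mat n n"
  shows "det B = det_on {0..<n} (\<lambda>i j. B $$ (i, j))"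
  using det_def'[OF assms] by (simp add: det_on_def)

lemma det_on_bij_betw:
  assumes f: "bij_betw f I T" and "finite I"
  shows "det_on T M = det_on I (\<lambda>i j. M (f i) (f j))"
proof -
  define \<Phi> where "\<Phi> = (\<lambda>\<pi> x. if x \<in> T then f (\<pi> (inv_into I f x)) else x)"
  have "det_on T M = (\<Sum>\<tau> | \<tau> permutes I. of_int (sign (\<Phi> \<tau>)) * (\<Prod>i\<in>T. M i (\<Phi> \<tau> i)))"
    unfolding det_on_def \<Phi>_def using bij_betw_permutations[OF f]
    by (rule sum.reindex_bij_betw[symmetric])
  also have "\<dots> = det_on I (\<lambda>i j. M (f i) (f j))"
    unfolding det_on_def
  proof (rule sum.cong[OF refl])
    fix \<tau> assume "\<tau> \<in> {\<tau>. \<tau> permutes I}"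
    then interpret permutes_bij_finite \<tau> I T f "inv_into I f" "\<Phi> \<tau>"
      using f \<open>finite I\<close> by unfold_locales (auto simp: \<Phi>_def bij_betw_def)
    have "(\<Prod>i\<in>T. M i (\<Phi> \<tau> i)) = (\<Prod>i\<in>I. M (f i) (\<Phi> \<tau> (f i)))"
      by (rule prod.reindex_bij_betw[OF f, symmetric])
    also have "\<dots> = (\<Prod>i\<in>I. M (f i) (f (\<tau> i)))"
      using f by (intro prod.cong refl) (auto simp: \<Phi>_def bij_betw_def)
    finally show "of_int (sign (\<Phi> \<tau>)) * (\<Prod>i\<in>T. M i (\<Phi> \<tau> i)) =
        of_int (sign \<tau>) * (\<Prod>i\<in>I. M (f i) (f (\<tau> i)))"
      using sign_p' by simp
  qed
  finally show ?thesis .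
qed

lemma prod_if_fixed:
  fixes l :: "'i \<Rightarrow> 'a::comm_semiring_1"
  assumes "finite T"
  shows "(\<Prod>i\<in>T. if i = p i then l i else 0) = (if \<forall>i\<in>T. p i = i then \<Prod>i\<in>T. l i else 0)"
proof (cases "\<forall>i\<in>T. p i = i")
  case False
  then obtain i where "i \<in> T" "p i \<noteq> i"
    by auto
  then have "(\<Prod>i\<in>T. if i = p i then l i else 0) = 0"
    using assms by (intro prod_zero bexI[of _ i]) auto
  with False show ?thesis
    by auto
qed (auto intro: prod.cong)

lemma permutes_subset_iff_fixes_diff:
  assumes "T \<subseteq> U"
  shows "p permutes U \<and> (\<forall>i\<in>U - T. p i = i) \<longleftrightarrow> p permutes T"
proof
  assume "p permutes U \<and> (\<forall>i\<in>U - T. p i = i)"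
  then show "p permutes T"
    unfolding permutes_def by (metis Diff_iff)
next
  assume "p permutes T"
  then show "p permutes U \<and> (\<forall>i\<in>U - T. p i = i)"
    using assms by (auto intro: permutes_subset permutes_not_in)
qed

lemma det_on_add_diag:
  assumes "finite U"
  shows "det_on U (\<lambda>i j. M i j + (if i = j then l i else 0)) =
    (\<Sum>T\<in>Pow U. (\<Prod>i\<in>U - T. l i) * det_on T M)"
proof -
  have "det_on U (\<lambda>i j. M i j + (if i = j then l i else 0)) =
      (\<Sum>p | p permutes U. \<Sum>T\<in>Pow U. of_int (sign p) *
         ((\<Prod>i\<in>T. M i (p i)) * (\<Prod>i\<in>U - T. if i = p i then l i else 0)))"
    using assms by (simp add: det_on_def prod_add sum_distrib_left)
  also have "\<dots> = (\<Sum>T\<in>Pow U. \<Sum>p | p permutes U. if \<forall>i\<in>U - T. p i = i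
      then (\<Prod>i\<in>U - T. l i) * (of_int (sign p) * (\<Prod>i\<in>T. M i (p i))) else 0)"
    using assms by (subst sum.swap) (auto simp: prod_if_fixed intro!: sum.cong)
  also have "\<dots> = (\<Sum>T\<in>Pow U. \<Sum>p | p permutes U \<and> (\<forall>i\<in>U - T. p i = i).
      (\<Prod>i\<in>U - T. l i) * (of_int (sign p) * (\<Prod>i\<in>T. M i (p i))))"
    using assms by (simp add: sum.inter_filter[symmetric] finite_permutations)
  also have "\<dots> = (\<Sum>T\<in>Pow U. (\<Prod>i\<in>U - T. l i) * det_on T M)"
    by (intro sum.cong refl)
      (auto simp: permutes_subset_iff_fixes_diff det_on_def sum_distrib_left)
  finally show ?thesis .
qed

lemma det_on_scale:
  "det_on T (\<lambda>i j. u i * M i j * v j) = (\<Prod>i\<in>T. u i) * (\<Prod>i\<in>T. v i) * det_on T M"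
proof -
  have "(\<Prod>i\<in>T. u i * M i (p i) * v (p i)) = (\<Prod>i\<in>T. u i) * (\<Prod>i\<in>T. v i) * (\<Prod>i\<in>T. M i (p i))"
    if "p permutes T" for p
    using prod.permute[OF that, of v] by (simp add: prod.distrib comp_def mult_ac)
  then show ?thesis
    unfolding det_on_def by (simp add: sum_distrib_left mult_ac)
qed

lemma det_on_gram:
  assumes "dim_row A = m" and "R \<subseteq> {0..<dim_col A}" and "card R = m"
  shows "det_on R (\<lambda>i j. (transpose_mat A * A) $$ (i, j)) = det (outer_sum A (\<lambda>_. 1) R)"
proof -
  obtain f where f: "bij_betw f {0..<m} R"
    using assms(3) ex_bij_betw_nat_finite finite_subset[OF assms(2)] by (metis finite_atLeastLessThan)
  define B where "B = mat m m (\<lambda>(p, l). A $$ (p, f l))"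
  have B: "B \<in> carrier_mat m m"
    by (simp add: B_def)
  have f_col: "f l < dim_col A" if "l < m" for l
    using bij_betwE[OF f] assms(2) that by force
  have "det_on R (\<lambda>i j. (transpose_mat A * A) $$ (i, j)) =
      det_on {0..<m} (\<lambda>i j. (transpose_mat A * A) $$ (f i, f j))"
    by (rule det_on_bij_betw[OF f]) simp
  also have "\<dots> = det_on {0..<m} (\<lambda>i j. (transpose_mat B * B) $$ (i, j))"
    using assms(1) f_col by (intro det_on_cong) (auto simp: B_def scalar_prod_def)
  also have "\<dots> = det (transpose_mat B * B)"
    using B by (intro det_eq_det_on[symmetric]) auto
  also have "\<dots> = det (B * transpose_mat B)"
    using B by (simp add: det_mult[of _ m] det_transpose)
  also have "B * transpose_mat B = outer_sum A (\<lambda>_. 1) R"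
  proof (rule eq_matI)
    fix p q assume "p < dim_row (outer_sum A (\<lambda>_. 1) R)" "q < dim_col (outer_sum A (\<lambda>_. 1) R)"
    then have "p < m" "q < m"
      using assms(1) by (auto simp: outer_sum_def)
    then have "(B * transpose_mat B) $$ (p, q) = (\<Sum>l\<in>{0..<m}. A $$ (p, f l) * A $$ (q, f l))"
      by (simp add: B_def scalar_prod_def)
    also have "\<dots> = (\<Sum>i\<in>R. A $$ (p, i) * A $$ (q, i))"
      by (rule sum.reindex_bij_betw[OF f])
    finally show "(B * transpose_mat B) $$ (p, q) = outer_sum A (\<lambda>_. 1) R $$ (p, q)"
      using \<open>p < m\<close> \<open>q < m\<close> assms(1) by (simp add: outer_sum_def)
  qed (use assms(1) in \<open>auto simp: outer_sum_def B_def\<close>)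
  finally show ?thesis .
qed

section \<open>Expansion of F into monomials\<close>

lemma index_diag_vec_mult:
  assumes "i < n" and "j < dim_col X" and "dim_row X = n"
  shows "(diag_vec n v * X) $$ (i, j) = v i * X $$ (i, j)"
proof -
  have "(diag_vec n v * X) $$ (i, j) = (\<Sum>l\<in>{0..<n}. (if i = l then v i else 0) * X $$ (l, j))"
    using assms by (simp add: scalar_prod_def diag_vec_def)
  also have "\<dots> = (\<Sum>l\<in>{0..<n}. if i = l then v i * X $$ (i, j) else 0)"
    by (intro sum.cong) auto
  finally show ?thesis
    using assms by simp
qed

lemma index_mult_diag_vec:
  assumes "i < dim_row X" and "j < n" and "dim_col X = n"
  shows "(X * diag_vec n v) $$ (i, j) = X $$ (i, j) * v j"
proof -
  have "(X * diag_vec n v) $$ (i, j) = (\<Sum>l\<in>{0..<n}. X $$ (i, l) * (if l = j then v l else 0))"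
    using assms by (simp add: scalar_prod_def diag_vec_def)
  also have "\<dots> = (\<Sum>l\<in>{0..<n}. if l = j then X $$ (i, j) * v j else 0)"
    by (intro sum.cong) auto
  finally show ?thesis
    using assms by simp
qed

lemma Fdet_eq_sum_principal_minors:
  fixes S :: "nat set" and x :: "nat \<Rightarrow> real" and t2 t3 :: real
  assumes "dim_col A = n" and "\<forall>i<n. 0 \<le> x i" and "0 \<le> t2" and "0 \<le> t3"
  defines "y \<equiv> yvec S x t2 t3"
  shows "Fdet A S x t1 t2 t3 = (\<Sum>T\<in>Pow {0..<n}. (\<Prod>i\<in>{0..<n} - T. 1 + y i) *
     (t1 ^ card T * (\<Prod>i\<in>T. y i) * det_on T (\<lambda>i j. (transpose_mat A * A) $$ (i, j))))"
proof -
  define d where "d = (\<lambda>i. sqrt (y i))"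
  define G where "G = (\<lambda>i j. (transpose_mat A * A) $$ (i, j))"
  define B where "B = one_mat n + t1 \<cdot>\<^sub>m (diag_vec n d * transpose_mat A * A * diag_vec n d) +
    diag_vec n y"
  have y_nonneg: "0 \<le> y i" if "i < n" for i
    using assms that by (simp add: y_def yvec_def)
  have B: "B \<in> carrier_mat n n"
    using assms(1) by (simp add: B_def diag_vec_def)
  have "B $$ (i, j) = (t1 * d i) * G i j * d j + (if i = j then 1 + y i else 0)"
    if "i < n" "j < n" for i j
  proof -
    have "diag_vec n d * transpose_mat A * A = diag_vec n d * (transpose_mat A * A)"
      by (rule assoc_mult_mat[of _ n n _ "dim_row A" _ n]) (use assms(1) in \<open>auto simp: diag_vec_def\<close>)
    moreover have "(diag_vec n d * (transpose_mat A * A) * diag_vec n d) $$ (i, j) =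
        (diag_vec n d * (transpose_mat A * A)) $$ (i, j) * d j"
      by (rule index_mult_diag_vec) (use that assms(1) in \<open>auto simp: diag_vec_def\<close>)
    moreover have "(diag_vec n d * (transpose_mat A * A)) $$ (i, j) = d i * G i j"
      unfolding G_def by (rule index_diag_vec_mult) (use that assms(1) in auto)
    ultimately show ?thesis
      using that assms(1) by (simp add: B_def diag_vec_def)
  qed
  then have "det B = det_on {0..<n} (\<lambda>i j. (t1 * d i) * G i j * d j + (if i = j then 1 + y i else 0))"
    using det_eq_det_on[OF B] by (auto intro: det_on_cong)
  also have "\<dots> = (\<Sum>T\<in>Pow {0..<n}. (\<Prod>i\<in>{0..<n} - T. 1 + y i) *
      ((\<Prod>i\<in>T. t1 * d i) * (\<Prod>i\<in>T. d i) * det_on T G))"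
    by (simp add: det_on_add_diag det_on_scale)
  also have "\<dots> = (\<Sum>T\<in>Pow {0..<n}. (\<Prod>i\<in>{0..<n} - T. 1 + y i) *
      (t1 ^ card T * (\<Prod>i\<in>T. y i) * det_on T G))"
  proof -
    have "(\<Prod>i\<in>T. t1 * d i) * (\<Prod>i\<in>T. d i) = t1 ^ card T * (\<Prod>i\<in>T. y i)"
      if "T \<subseteq> {0..<n}" for T
    proof -
      have "(\<Prod>i\<in>T. d i) * (\<Prod>i\<in>T. d i) = (\<Prod>i\<in>T. y i)"
        using that by (auto simp: d_def y_nonneg prod.distrib[symmetric] intro!: prod.cong)
      then show ?thesis
        by (simp add: prod.distrib mult.assoc)
    qed
    then show ?thesis
      by (intro sum.cong refl) simp
  qed
  finally show ?thesis
    using assms(1) by (simp add: Fdet_def Let_def B_def d_def y_def G_def)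
qed

lemma prod_yvec:
  assumes "finite W"
  shows "(\<Prod>i\<in>W. yvec S x t2 t3 i) = (\<Prod>i\<in>W - S. x i) * t2 ^ card (W - S) * t3 ^ card (W \<inter> S)"
proof -
  have "(\<Prod>i\<in>W. yvec S x t2 t3 i) = (\<Prod>i\<in>W \<inter> S. yvec S x t2 t3 i) * (\<Prod>i\<in>W - S. yvec S x t2 t3 i)"
    using assms by (rule prod.Int_Diff)
  also have "\<dots> = (\<Prod>i\<in>W \<inter> S. t3) * (\<Prod>i\<in>W - S. x i * t2)"
    by (intro arg_cong2[where f = "(*)"] prod.cong) (auto simp: yvec_def)
  finally show ?thesis
    by (simp add: prod.distrib mult_ac)
qed

lemma Fdet_monomial_expansion:
  assumes "dim_col A = n" and "\<forall>i<n. 0 \<le> x i" and "0 \<le> t2" and "0 \<le> t3"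
  shows "Fdet A S x t1 t2 t3 = (\<Sum>(T, V)\<in>Sigma (Pow {0..<n}) (\<lambda>T. Pow ({0..<n} - T)).
    det_on T (\<lambda>i j. (transpose_mat A * A) $$ (i, j)) * (\<Prod>i\<in>(T \<union> V) - S. x i) *
    t1 ^ card T * t2 ^ card ((T \<union> V) - S) * t3 ^ card ((T \<union> V) \<inter> S))"
proof -
  let ?U = "{0..<n}" and ?y = "yvec S x t2 t3"
  let ?G = "\<lambda>i j. (transpose_mat A * A) $$ (i, j)"
  have monomial: "(\<Prod>i\<in>V. ?y i) * (t1 ^ card T * (\<Prod>i\<in>T. ?y i) * det_on T ?G) =
      det_on T ?G * (\<Prod>i\<in>(T \<union> V) - S. x i) *
      t1 ^ card T * t2 ^ card ((T \<union> V) - S) * t3 ^ card ((T \<union> V) \<inter> S)"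
    if "T \<subseteq> ?U" and "V \<subseteq> ?U - T" for T V
  proof -
    have "finite T" "finite V" "T \<inter> V = {}"
      using that by (auto intro: finite_subset[of _ ?U])
    then have "(\<Prod>i\<in>V. ?y i) * (t1 ^ card T * (\<Prod>i\<in>T. ?y i) * det_on T ?G) =
        det_on T ?G * t1 ^ card T * (\<Prod>i\<in>T \<union> V. ?y i)"
      by (simp add: prod.union_disjoint mult_ac)
    then show ?thesis
      using \<open>finite T\<close> \<open>finite V\<close> by (simp add: prod_yvec mult_ac)
  qed
  have "(\<Prod>i\<in>?U - T. 1 + ?y i) = (\<Sum>V\<in>Pow (?U - T). \<Prod>i\<in>V. ?y i)" for T
    using prod_add[of "?U - T" ?y "\<lambda>_. 1"] by (simp add: add.commute)
  then show ?thesis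
    using Fdet_eq_sum_principal_minors[OF assms] by (simp add: monomial sum_distrib_right sum.Sigma)
qed

section \<open>The coefficient of \<open>t1\<^sup>m t2\<^bsup>k-s\<^esup> t3\<^sup>s\<close>\<close>

lemma sum_pairs_reindex_complement:
  fixes g :: "nat set \<Rightarrow> real"
  assumes "finite U" and "S \<subseteq> U"
  shows "(\<Sum>(T, V) | (T, V) \<in> Sigma (Pow U) (\<lambda>T. Pow (U - T)) \<and> card T = m \<and>
        card ((T \<union> V) - S) = k - card S \<and> card ((T \<union> V) \<inter> S) = card S.
      g T * (\<Prod>i\<in>(T \<union> V) - S. x i)) =
    (\<Sum>R | R \<subseteq> U \<and> card R = m \<and> card (R - S) \<le> k - card S.
      (\<Prod>j\<in>R - S. x j) * g R *
      (\<Sum>W | W \<subseteq> U - (S \<union> R) \<and> card W = k - card S - card (R - S). \<Prod>j\<in>W. x j))"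
    (is "sum ?f ?Q = sum ?g ?RR")
proof -
  let ?s = "card S" and ?WW = "\<lambda>R. {W. W \<subseteq> U - (S \<union> R) \<and> card W = k - card S - card (R - S)}"
  have "finite S"
    using assms finite_subset by blast
  have "sum ?g ?RR = (\<Sum>R\<in>?RR. \<Sum>W\<in>?WW R. g R * ((\<Prod>j\<in>R - S. x j) * (\<Prod>j\<in>W. x j)))"
    by (simp add: sum_distrib_left mult_ac)
  also have "\<dots> = (\<Sum>(R, W)\<in>Sigma ?RR ?WW. g R * ((\<Prod>j\<in>R - S. x j) * (\<Prod>j\<in>W. x j)))"
    using \<open>finite U\<close> by (intro sum.Sigma) (auto intro: finite_subset[of _ "Pow U"])
  also have "\<dots> = sum ?f ?Q"
  proof (rule sum.reindex_bij_witness[where j = "\<lambda>(R, W). (R, W \<union> (S - R))" and i = "\<lambda>(T, V). (T, V - S)"],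
      goal_cases)
    case (1 r)
    then show ?case by auto
  next
    case (2 r)
    then obtain R W where r: "r = (R, W)" and R: "R \<subseteq> U" "card R = m" "card (R - S) \<le> k - ?s"
      and W: "W \<subseteq> U - (S \<union> R)" "card W = k - ?s - card (R - S)"
      by blast
    have "finite R" "finite W"
      using R W \<open>finite U\<close> by (auto intro: finite_subset)
    have "(R \<union> (W \<union> (S - R))) - S = (R - S) \<union> W" and "(R \<union> (W \<union> (S - R))) \<inter> S = S"
      using W by auto
    moreover have "card ((R - S) \<union> W) = k - ?s"
      using R W \<open>finite R\<close> \<open>finite W\<close> by (subst card_Un_disjoint) auto
    ultimately show ?case
      using r R W assms(2) by auto
  next
    case (3 q)
    then obtain T V where q: "q = (T, V)" and V: "V \<subseteq> U - T" and inside: "card ((T \<union> V) \<inter> S) = ?s"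
      by blast
    have "(T \<union> V) \<inter> S = S"
      using inside \<open>finite S\<close> by (intro card_subset_eq) auto
    then show ?case
      using q V by auto
  next
    case (4 q)
    then obtain T V where q: "q = (T, V)" and T: "T \<subseteq> U" "card T = m" and V: "V \<subseteq> U - T"
      and out: "card ((T \<union> V) - S) = k - ?s"
      by blast
    have "finite T" "finite V"
      using T V \<open>finite U\<close> by (auto intro: finite_subset)
    have "(T \<union> V) - S = (T - S) \<union> (V - S)" and "(T - S) \<inter> (V - S) = {}"
      using V by auto
    then have "card (T - S) + card (V - S) = k - ?s"
      using out card_Un_disjoint[of "T - S" "V - S"] \<open>finite T\<close> \<open>finite V\<close> by simp
    then show ?case
      using q T V by auto
  next
    case (5 r)
    then obtain R W where r: "r = (R, W)" and "R \<subseteq> U" and W: "W \<subseteq> U - (S \<union> R)"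
      by blast
    then have "finite R" "finite W"
      using \<open>finite U\<close> by (auto intro: finite_subset)
    have "(R \<union> (W \<union> (S - R))) - S = (R - S) \<union> W"
      using W by auto
    moreover have "(\<Prod>j\<in>(R - S) \<union> W. x j) = (\<Prod>j\<in>R - S. x j) * (\<Prod>j\<in>W. x j)"
      using W \<open>finite R\<close> \<open>finite W\<close> by (intro prod.union_disjoint) auto
    ultimately show ?case
      using r by simp
  qed
  finally show ?thesis ..
qed

definition Fdet_coeff :: "real mat \<Rightarrow> nat set \<Rightarrow> (nat \<Rightarrow> real) \<Rightarrow> nat \<Rightarrow> nat \<Rightarrow> nat \<Rightarrow> real" where
  "Fdet_coeff A S x a b d =
    (\<Sum>(T, V) | (T, V) \<in> Sigma (Pow {0..<dim_col A}) (\<lambda>T. Pow ({0..<dim_col A} - T)) \<and> card T = a \<and>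
        card ((T \<union> V) - S) = b \<and> card ((T \<union> V) \<inter> S) = d.
      det_on T (\<lambda>i j. (transpose_mat A * A) $$ (i, j)) * (\<Prod>i\<in>(T \<union> V) - S. x i))"

lemma poly3_rep_Fdet_coeff:
  assumes "\<forall>i<dim_col A. 0 \<le> x i"
  shows "poly3_rep (Fdet_coeff A S x) (Fdet A S x)"
proof -
  define P where "P = Sigma (Pow {0..<dim_col A}) (\<lambda>T. Pow ({0..<dim_col A} - T))"
  define h where "h = (\<lambda>(T, V).
    det_on T (\<lambda>i j. (transpose_mat A * A) $$ (i, j)) * (\<Prod>i\<in>(T \<union> V) - S. x i))"
  define ka where "ka = (\<lambda>(T :: nat set, V :: nat set). card T)"
  define kb where "kb = (\<lambda>(T, V). card ((T \<union> V) - S))"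
  define kd where "kd = (\<lambda>(T, V). card ((T \<union> V) \<inter> S))"
  have "poly3_rep (\<lambda>a b d. \<Sum>q | q \<in> P \<and> ka q = a \<and> kb q = b \<and> kd q = d. h q) (Fdet A S x)"
  proof (rule poly3_rep_monomial_sum)
    show "finite P"
      by (simp add: P_def)
    show "Fdet A S x t1 t2 t3 = (\<Sum>q\<in>P. h q * t1 ^ ka q * t2 ^ kb q * t3 ^ kd q)"
      if "0 \<le> t2" "0 \<le> t3" for t1 t2 t3
      using Fdet_monomial_expansion[OF refl assms that]
      by (simp add: P_def h_def ka_def kb_def kd_def case_prod_unfold)
  qed
  moreover have "(\<lambda>a b d. \<Sum>q | q \<in> P \<and> ka q = a \<and> kb q = b \<and> kd q = d. h q) = Fdet_coeff A S x"
    unfolding Fdet_coeff_def P_def h_def ka_def kb_def kd_def by (intro ext sum.cong) auto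
  ultimately show ?thesis
    by simp
qed

lemma Fdet_coeff_eq:
  assumes "dim_row A = m" and "S \<subseteq> {0..<dim_col A}"
  shows "Fdet_coeff A S x m (k - card S) (card S) =
    (\<Sum>R | R \<subseteq> {0..<dim_col A} \<and> card R = m \<and> card (R - S) \<le> k - card S.
       (\<Prod>j\<in>R - S. x j) * det (outer_sum A (\<lambda>_. 1) R) *
       (\<Sum>W | W \<subseteq> {0..<dim_col A} - (S \<union> R) \<and> card W = k - card S - card (R - S). \<Prod>j\<in>W. x j))"
proof -
  have "Fdet_coeff A S x m (k - card S) (card S) =
    (\<Sum>R | R \<subseteq> {0..<dim_col A} \<and> card R = m \<and> card (R - S) \<le> k - card S.
       (\<Prod>j\<in>R - S. x j) * det_on R (\<lambda>i j. (transpose_mat A * A) $$ (i, j)) *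
       (\<Sum>W | W \<subseteq> {0..<dim_col A} - (S \<union> R) \<and> card W = k - card S - card (R - S). \<Prod>j\<in>W. x j))"
    unfolding Fdet_coeff_def by (rule sum_pairs_reindex_complement) (use assms(2) in auto)
  also have "\<dots> = (\<Sum>R | R \<subseteq> {0..<dim_col A} \<and> card R = m \<and> card (R - S) \<le> k - card S.
       (\<Prod>j\<in>R - S. x j) * det (outer_sum A (\<lambda>_. 1) R) *
       (\<Sum>W | W \<subseteq> {0..<dim_col A} - (S \<union> R) \<and> card W = k - card S - card (R - S). \<Prod>j\<in>W. x j))"
    using assms(1) by (intro sum.cong refl) (simp add: det_on_gram)
  finally show ?thesis .
qed

theorem proposition3:
  fixes A :: "real mat" and m k n :: nat and xh :: "nat \<Rightarrow> real" and S :: "nat set"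
  assumes "0 < m" and "m \<le> k" and "k \<le> n"
    and "dim_row A = m" and "dim_col A = n"
    and "optimal_sol A k xh"
    and "S \<subseteq> {0..<n}" and "card S \<le> k"
  shows "(\<exists>c. poly3_rep c (Fdet A S xh)) \<and>
    (\<forall>c. poly3_rep c (Fdet A S xh) \<longrightarrow>
      c m (k - card S) (card S) =
        (\<Sum>R\<in>{R. R \<subseteq> {0..<n} \<and> card R = m \<and> card (R - S) \<le> k - card S}.
           (\<Prod>j\<in>R - S. xh j) * det (outer_sum A (\<lambda>_. 1) R) *
           (\<Sum>W\<in>{W. W \<subseteq> {0..<n} - (S \<union> R) \<and> card W = k - card S - card (R - S)}.
              \<Prod>j\<in>W. xh j)))"
proof -
  have "\<forall>i<dim_col A. 0 \<le> xh i"
    using assms(5,6) by (simp add: optimal_sol_def feasible_def)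
  then have rep: "poly3_rep (Fdet_coeff A S xh) (Fdet A S xh)"
    by (rule poly3_rep_Fdet_coeff)
  show ?thesis
    using rep Fdet_coeff_eq[OF assms(4), of S xh k] assms(5,7)
    by (auto dest: poly3_rep_unique[OF _ rep])
qed

end
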